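(* Let $f:\mathbb{R}^d\times\mathbb{R}^d\to\mathbb{R}^d$ and $g:\mathbb{R}^d\times\mathbb{R}^d\to\mathbb{R}^{d\times m}$ satisfy: (i) for each $R>0$ there is $L_R>0$ such that $|f(x,y)-f(\bar x,\bar y)|\vee|g(x,y)-g(\bar x,\bar y)|\le L_R(|x-\bar x|+|y-\bar y|)$ whenever $|x|\vee|y|\vee|\bar x|\vee|\bar y|\le R$; (ii) there are constants $a_{ii}\in\mathbb{R}$, $a_{ij}\ge0$ for $i\ne j$, $b_{ij}\ge0$ such that for every $i\in\{1,\dots,d\}$ and all $x,y\in\mathbb{R}^d$: $2x_if_i(x,y)+\sum_{l=1}^m g_{il}(x,y)^2\le\sum_{j=1}^d a_{ij}x_j^2+\sum_{j=1}^d b_{ij}y_j^2$. Then for any fixed $\Delta\in(0,\Delta^* )$ there exist constants $a_{ii}\in\mathbb{R}$, $a_{ij}\ge0$ ($i\ne j$), $b_{ij}\ge0$ such that $$2x_if_{\Delta,i}(x,y)+\sum_{l=1}^m g_{\Delta,il}(x,y)^2\le\sum_{j=1}^d a_{ij}x_j^2+\sum_{j=1}^d b_{ij}y_j^2,\qquad i\in\{1,\dots,d\},$$ for all $x,y\in\mathbb{R}^d$, where $f_\Delta, g_\Delta$ are the modified truncated functions defined in the context.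
   Context: Let $\Delta^*>0$ and let $h:(0,\Delta^*]\to(0,\infty)$ be strictly decreasing with $\lim_{\Delta\to0}h(\Delta)=\infty$ and $\lim_{\Delta\to0}L_{h(\Delta)}^2\Delta=0$, where $L_R$ is the local Lipschitz constant above. For $\Delta\in(0,\Delta^* )$ the modified truncated function is $f_\Delta(x,y)=f(x,y)$ if $|x|\vee|y|\le h(\Delta)$ and $f_\Delta(x,y)=\frac{|x|\vee|y|}{h(\Delta)}f\big(\frac{h(\Delta)}{|x|\vee|y|}x,\frac{h(\Delta)}{|x|\vee|y|}y\big)$ if $|x|\vee|y|>h(\Delta)$; $g_\Delta$ is defined from $g$ in the same way. $f_{\Delta,i}$ and $g_{\Delta,il}$ denote components. *)

theory Defs
  imports "HOL-Analysis.Analysis"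
begin

definition trunc_fun ::
  "(real \<Rightarrow> real) \<Rightarrow> real \<Rightarrow> ('a::real_normed_vector \<Rightarrow> 'a \<Rightarrow> 'b::real_normed_vector)
     \<Rightarrow> 'a \<Rightarrow> 'a \<Rightarrow> 'b" where
  "trunc_fun h \<Delta> F x y =
     (let r = max (norm x) (norm y) in
      if r \<le> h \<Delta> then F x y
      else (r / h \<Delta>) *\<^sub>R F ((h \<Delta> / r) *\<^sub>R x) ((h \<Delta> / r) *\<^sub>R y))"

end

theory Submission
  imports Defs
begin

text \<open>Both sides of the Khasminskii-type condition are homogeneous of degree two in the
  triple (x, y, F), while truncation replaces F by the positive rescaling
  k F(x/k, y/k) with k = max 1 (max |x| |y| / h(Delta)). Hence the truncated
  coefficients satisfy the condition with the very same constants a, b.\<close>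

definition khasminskii_condition ::
  "('d \<Rightarrow> 'd \<Rightarrow> real) \<Rightarrow> ('d \<Rightarrow> 'd \<Rightarrow> real)
     \<Rightarrow> (real^'d \<Rightarrow> real^'d \<Rightarrow> real^'d) \<Rightarrow> (real^'d \<Rightarrow> real^'d \<Rightarrow> real^'m^'d) \<Rightarrow> bool" where
  "khasminskii_condition a b f g \<longleftrightarrow>
     (\<forall>i x y. 2 * (x $ i) * (f x y $ i) + (\<Sum>l\<in>UNIV. (g x y $ i $ l)\<^sup>2)
        \<le> (\<Sum>j\<in>UNIV. a i j * (x $ j)\<^sup>2) + (\<Sum>j\<in>UNIV. b i j * (y $ j)\<^sup>2))"

definition trunc_factor :: "(real \<Rightarrow> real) \<Rightarrow> real \<Rightarrow> 'a::real_normed_vector \<Rightarrow> 'a \<Rightarrow> real" where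
  "trunc_factor h \<Delta> x y = max 1 (max (norm x) (norm y) / h \<Delta>)"

lemma trunc_factor_pos: "0 < trunc_factor h \<Delta> x y"
  by (simp add: trunc_factor_def less_max_iff_disj)

lemma trunc_fun_eq_rescale:
  assumes "h \<Delta> > 0"
  shows "trunc_fun h \<Delta> F = (\<lambda>x y.
    trunc_factor h \<Delta> x y *\<^sub>R F (x /\<^sub>R trunc_factor h \<Delta> x y) (y /\<^sub>R trunc_factor h \<Delta> x y))"
proof (intro ext)
  fix x y
  show "trunc_fun h \<Delta> F x y =
    trunc_factor h \<Delta> x y *\<^sub>R F (x /\<^sub>R trunc_factor h \<Delta> x y) (y /\<^sub>R trunc_factor h \<Delta> x y)"
  proof (cases "max (norm x) (norm y) \<le> h \<Delta>")
    case True
    then have "trunc_factor h \<Delta> x y = 1"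
      using assms by (simp add: trunc_factor_def)
    with True show ?thesis
      by (simp add: trunc_fun_def Let_def)
  next
    case False
    then have "trunc_factor h \<Delta> x y = max (norm x) (norm y) / h \<Delta>"
      using assms by (simp add: trunc_factor_def max_def)
    then show ?thesis
      unfolding trunc_fun_def Let_def if_not_P[OF False] by simp
  qed
qed

lemma khasminskii_condition_rescale:
  fixes k :: "real^'d \<Rightarrow> real^'d \<Rightarrow> real"
  assumes cond: "khasminskii_condition a b f g"
    and k_pos: "\<And>x y. 0 < k x y"
  shows "khasminskii_condition a b
    (\<lambda>x y. k x y *\<^sub>R f (x /\<^sub>R k x y) (y /\<^sub>R k x y))
    (\<lambda>x y. k x y *\<^sub>R g (x /\<^sub>R k x y) (y /\<^sub>R k x y))"
  unfolding khasminskii_condition_def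
proof (intro allI)
  fix i and x y :: "real^'d"
  define c where "c = k x y"
  define x' where "x' = x /\<^sub>R c"
  define y' where "y' = y /\<^sub>R c"
  have "c > 0"
    using k_pos by (simp add: c_def)
  then have x: "x $ j = c * (x' $ j)" and y: "y $ j = c * (y' $ j)" for j
    by (simp_all add: x'_def y'_def)
  have "2 * (x $ i) * (c * (f x' y' $ i)) + (\<Sum>l\<in>UNIV. (c * (g x' y' $ i $ l))\<^sup>2)
      = c\<^sup>2 * (2 * (x' $ i) * (f x' y' $ i) + (\<Sum>l\<in>UNIV. (g x' y' $ i $ l)\<^sup>2))"
    by (simp add: x sum_distrib_left algebra_simps power2_eq_square)
  also have "\<dots> \<le> c\<^sup>2 * ((\<Sum>j\<in>UNIV. a i j * (x' $ j)\<^sup>2) + (\<Sum>j\<in>UNIV. b i j * (y' $ j)\<^sup>2))"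
    using cond by (intro mult_left_mono) (simp_all add: khasminskii_condition_def)
  also have "\<dots> = (\<Sum>j\<in>UNIV. a i j * (x $ j)\<^sup>2) + (\<Sum>j\<in>UNIV. b i j * (y $ j)\<^sup>2)"
    by (simp add: x y power_mult_distrib sum_distrib_left algebra_simps)
  finally show "2 * (x $ i) * ((k x y *\<^sub>R f (x /\<^sub>R k x y) (y /\<^sub>R k x y)) $ i)
      + (\<Sum>l\<in>UNIV. ((k x y *\<^sub>R g (x /\<^sub>R k x y) (y /\<^sub>R k x y)) $ i $ l)\<^sup>2)
    \<le> (\<Sum>j\<in>UNIV. a i j * (x $ j)\<^sup>2) + (\<Sum>j\<in>UNIV. b i j * (y $ j)\<^sup>2)"
    by (simp add: c_def x'_def y'_def)
qed

lemma khasminskii_condition_trunc_fun: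
  assumes "khasminskii_condition a b f g" and "h \<Delta> > 0"
  shows "khasminskii_condition a b (trunc_fun h \<Delta> f) (trunc_fun h \<Delta> g)"
  using khasminskii_condition_rescale[OF assms(1) trunc_factor_pos]
  by (simp add: trunc_fun_eq_rescale[where h = h and \<Delta> = \<Delta>, OF assms(2)])

theorem lemma4p1:
  fixes f :: "real^'d \<Rightarrow> real^'d \<Rightarrow> real^'d"
    and g :: "real^'d \<Rightarrow> real^'d \<Rightarrow> real^'m^'d"
    and L :: "real \<Rightarrow> real"
    and h :: "real \<Rightarrow> real"
    and \<Delta>star \<Delta> :: real
  assumes L_pos: "\<forall>R>0. L R > 0"
    and loc_lip: "\<forall>R>0. \<forall>x y xb yb.
        max (max (norm x) (norm y)) (max (norm xb) (norm yb)) \<le> R \<longrightarrow>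
        max (norm (f x y - f xb yb)) (norm (g x y - g xb yb))
          \<le> L R * (norm (x - xb) + norm (y - yb))"
    and khasminskii: "\<exists>a b :: 'd \<Rightarrow> 'd \<Rightarrow> real.
        (\<forall>i j. i \<noteq> j \<longrightarrow> a i j \<ge> 0) \<and> (\<forall>i j. b i j \<ge> 0) \<and>
        (\<forall>i x y. 2 * (x $ i) * (f x y $ i) + (\<Sum>l\<in>UNIV. (g x y $ i $ l)\<^sup>2)
            \<le> (\<Sum>j\<in>UNIV. a i j * (x $ j)\<^sup>2) + (\<Sum>j\<in>UNIV. b i j * (y $ j)\<^sup>2))"
    and Dstar_pos: "\<Delta>star > 0"
    and h_pos: "\<forall>t. 0 < t \<and> t \<le> \<Delta>star \<longrightarrow> h t > 0"
    and h_decr: "\<forall>s t. 0 < s \<and> s < t \<and> t \<le> \<Delta>star \<longrightarrow> h t < h s"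
    and h_lim: "filterlim h at_top (at_right 0)"
    and hL_lim: "((\<lambda>t. (L (h t))\<^sup>2 * t) \<longlongrightarrow> 0) (at_right 0)"
    and Delta: "0 < \<Delta>" "\<Delta> < \<Delta>star"
  shows "\<exists>a b :: 'd \<Rightarrow> 'd \<Rightarrow> real.
        (\<forall>i j. i \<noteq> j \<longrightarrow> a i j \<ge> 0) \<and> (\<forall>i j. b i j \<ge> 0) \<and>
        (\<forall>i x y. 2 * (x $ i) * (trunc_fun h \<Delta> f x y $ i)
              + (\<Sum>l\<in>UNIV. (trunc_fun h \<Delta> g x y $ i $ l)\<^sup>2)
            \<le> (\<Sum>j\<in>UNIV. a i j * (x $ j)\<^sup>2) + (\<Sum>j\<in>UNIV. b i j * (y $ j)\<^sup>2))"
proof -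
  obtain a b :: "'d \<Rightarrow> 'd \<Rightarrow> real"
    where a_offdiag: "\<forall>i j. i \<noteq> j \<longrightarrow> a i j \<ge> 0" and b_nonneg: "\<forall>i j. b i j \<ge> 0"
      and cond: "khasminskii_condition a b f g"
    using khasminskii unfolding khasminskii_condition_def by blast
  have "h \<Delta> > 0"
    using h_pos Delta by auto
  with cond have "khasminskii_condition a b (trunc_fun h \<Delta> f) (trunc_fun h \<Delta> g)"
    by (rule khasminskii_condition_trunc_fun)
  with a_offdiag b_nonneg show ?thesis
    unfolding khasminskii_condition_def by blast
qed

end
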